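(* Let $u:2^{[n]} \rightarrow \mathbb{R}_{\geq 0}$ be a (monotone, normalized) submodular and second-order supermodular set function and let $c:2^{[n]} \rightarrow \mathbb{R}_{\geq 0}$ be a modular set function with positive item costs. If the local search algorithm converges before terminating, i.e., it reaches a permutation $\pi$ such that no neighbor of $\pi$ (a permutation obtained by removing the element in some position $i$ of $\pi$ and reinserting it in some position $j$) has strictly smaller objective value, then the permutation it returns is a $4$-approximation to Min-Sum Submodular Cover on $u$ and $c$.
   Context: Min-Sum Submodular Cover: given a positive integer $n$, a monotone submodular utility function $u:2^{[n]} \rightarrow \mathbb{R}_{\geq 0}$ with $u(\emptyset)=0$, and positive costs $c_1,\ldots,c_n$ defining the modular cost function $c(S)=\sum_{i\in S} c_i$, find a permutation of $[n]$ minimizing $\sum_{i=1}^{n} c(S_i)\,(u(S_i)-u(S_{i-1}))$, where $S_i$ is the set of the first $i$ elements of the permutation (and $S_0=\emptyset$). Notation: $f(e|S) := f(S\cup\{e\})-f(S)$. The function $u$ is submodular if $u(i|S) \geq u(i|S\cup\{j\})$, and second-order supermodular if $u(i|S) - u(i|S \cup \{j\}) \geq u(i|S \cup \{k\}) - u(i|S \cup \{k,j\})$, for all $S\subseteq[n]$ and $i,j,k \in [n]\setminus S$. The local search algorithm: given $\epsilon>0$ and an initial $d$-approximate permutation $\pi$, repeat for up to $2n^3\log(d/\epsilon)$ iterations: among all neighbors $\pi'$ of $\pi$ (obtained by moving the element in position $i$ to position $j$, for $i,j\in[n]$), find one with lowest objective value; if its objective value is strictly less than that of $\pi$, replace $\pi$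 by it; otherwise the algorithm has converged and returns $\pi$. If the iteration budget is exhausted, it returns the current $\pi$. *)

theory Defs
  imports Complex_Main
begin

text \<open>Ground set [n] is rendered as {..<n} (elements 0,...,n-1).
  A permutation of [n] is a list with distinct entries whose set is {..<n}.\<close>

definition is_perm :: "nat \<Rightarrow> nat list \<Rightarrow> bool" where
  "is_perm n xs \<longleftrightarrow> distinct xs \<and> set xs = {..<n}"

definition cost :: "(nat \<Rightarrow> real) \<Rightarrow> nat set \<Rightarrow> real" where
  "cost c S = (\<Sum>i\<in>S. c i)"

definition mssc_obj :: "(nat set \<Rightarrow> real) \<Rightarrow> (nat \<Rightarrow> real) \<Rightarrow> nat list \<Rightarrow> real" where
  "mssc_obj u c xs =
     (\<Sum>i=1..length xs. cost c (set (take i xs)) *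
        (u (set (take i xs)) - u (set (take (i - 1) xs))))"

definition move :: "nat \<Rightarrow> nat \<Rightarrow> 'a list \<Rightarrow> 'a list" where
  "move i j xs = (let x = xs ! i; ys = take i xs @ drop (Suc i) xs
                  in take j ys @ x # drop j ys)"

definition marg :: "(nat set \<Rightarrow> real) \<Rightarrow> nat \<Rightarrow> nat set \<Rightarrow> real" where
  "marg u e S = u (insert e S) - u S"

definition monotone_set_fun :: "nat \<Rightarrow> (nat set \<Rightarrow> real) \<Rightarrow> bool" where
  "monotone_set_fun n u \<longleftrightarrow> (\<forall>S T. S \<subseteq> T \<and> T \<subseteq> {..<n} \<longrightarrow> u S \<le> u T)"

definition submodular :: "nat \<Rightarrow> (nat set \<Rightarrow> real) \<Rightarrow> bool" where
  "submodular n u \<longleftrightarrow> (\<forall>S i j. S \<subseteq> {..<n} \<and> i \<in> {..<n} - S \<and> j \<in> {..<n} - S \<longrightarrow>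
      marg u i S \<ge> marg u i (S \<union> {j}))"

definition second_order_supermodular :: "nat \<Rightarrow> (nat set \<Rightarrow> real) \<Rightarrow> bool" where
  "second_order_supermodular n u \<longleftrightarrow>
     (\<forall>S i j k. S \<subseteq> {..<n} \<and> i \<in> {..<n} - S \<and> j \<in> {..<n} - S \<and> k \<in> {..<n} - S \<longrightarrow>
      marg u i S - marg u i (S \<union> {j}) \<ge> marg u i (S \<union> {k}) - marg u i (S \<union> {k, j}))"

end

theory Submission
  imports Defs
begin

(* Let S_i and P_q be the sets of the first i elements of the local optimum pi and of the
  first q elements of an arbitrary permutation sigma, and R_i = u([n]) - u(S_i),
  rho_q = u([n]) - u(P_q) the residual utilities; both objectives are sums of cost times
  residual. Telescoping along sigma splits R_i into the charges
  marg(sigma_q | S_i \<union> P_q), so ALG = sum over (i, q) of c(pi_i) times a charge.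
  Charges with R_i <= 2 rho_q are paid for by local optimality: since moving
  sigma_q = pi_j forward to the first position k with R_k <= 2 rho_q does not help,
  they sum to at most c(sigma_q) R_k <= 2 c(sigma_q) rho_q, hence to at most 2 OPT in total.
  By submodularity the remaining charges, those with rho_q < R_i / 2, are bounded by the
  marginal gains of sigma once its residual is below R_i / 2, hence by R_i / 2; they sum to
  at most ALG / 2. Thus ALG <= ALG / 2 + 2 OPT. *)

lemma marg_mem_eq_0: "x \<in> S \<Longrightarrow> marg u x S = 0"
  by (simp add: marg_def insert_absorb)

lemma marg_antimono:
  assumes submod: "submodular n u" and "A \<subseteq> B" "B \<subseteq> {..<n}" "x < n"
  shows "marg u x B \<le> marg u x A"
proof -
  have "marg u x (A \<union> D) \<le> marg u x A" if "finite D" "A \<union> D \<subseteq> {..<n}" for D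
    using that
  proof (induction D rule: finite_induct)
    case (insert d D)
    have "marg u x (A \<union> insert d D) \<le> marg u x (A \<union> D)"
    proof (cases "x \<in> A \<union> D \<or> d \<in> A \<union> D")
      case True
      then show ?thesis by (auto simp: marg_mem_eq_0 insert_absorb)
    next
      case False
      then show ?thesis using submod insert.prems \<open>x < n\<close> unfolding submodular_def by auto
    qed
    with insert show ?case by auto
  qed simp
  moreover have "finite (B - A)" using assms(3) finite_subset by blast
  ultimately show ?thesis using assms(2,3) by (metis Diff_partition)
qed

lemma sum_marg_prefixes:
  "(\<Sum>q<length xs. marg u (xs ! q) (A \<union> set (take q xs))) = u (A \<union> set xs) - u A"
proof -
  have "(\<Sum>q<length xs. marg u (xs ! q) (A \<union> set (take q xs)))
      = (\<Sum>q<length xs. u (A \<union> set (take (Suc q) xs)) - u (A \<union> set (take q xs)))"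
    by (intro sum.cong) (auto simp: marg_def take_Suc_conv_app_nth)
  also have "\<dots> = u (A \<union> set xs) - u A"
    using sum_lessThan_telescope[of "\<lambda>q. u (A \<union> set (take q xs))"] by simp
  finally show ?thesis .
qed

lemma sum_drops_below_le:
  fixes \<rho> :: "nat \<Rightarrow> real"
  assumes "antimono \<rho>"
  shows "(\<Sum>q<m. if \<rho> q < z then \<rho> q - \<rho> (Suc q) else 0) \<le> max 0 (z - \<rho> m)"
proof (induction m)
  case (Suc m)
  have "\<rho> (Suc m) \<le> \<rho> m" using assms by (simp add: antimono_def)
  with Suc show ?case by auto
qed simp

lemma antimono_sublevel_eq_atLeast:
  fixes R :: "nat \<Rightarrow> 'a :: linorder"
  assumes "antimono R" "R m \<le> t"
  obtains k where "k \<le> m" "\<And>i. R i \<le> t \<longleftrightarrow> k \<le> i"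
proof
  define k where "k = (LEAST k. R k \<le> t)"
  show "k \<le> m" unfolding k_def using assms(2) by (rule Least_le)
  have "R k \<le> t" unfolding k_def using assms(2) by (rule LeastI)
  then show "R i \<le> t \<longleftrightarrow> k \<le> i" for i
    using assms(1) unfolding k_def by (metis Least_le antimono_def order_trans)
qed

fun cover_cost :: "(nat set \<Rightarrow> real) \<Rightarrow> (nat \<Rightarrow> real) \<Rightarrow> real \<Rightarrow> nat set \<Rightarrow> nat list \<Rightarrow> real" where
  "cover_cost u c U B [] = 0"
| "cover_cost u c U B (y # ys) = c y * (U - u B) + cover_cost u c U (insert y B) ys"

lemma cover_cost_append:
  "cover_cost u c U B (xs @ ys) = cover_cost u c U B xs + cover_cost u c U (B \<union> set xs) ys"
  by (induction xs arbitrary: B) auto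

lemma cover_cost_change_level:
  "cover_cost u c U B xs = cover_cost u c U' B xs + (U - U') * sum_list (map c xs)"
  by (induction xs arbitrary: B) (auto simp: algebra_simps)

lemma cover_cost_conv_sum:
  "cover_cost u c U B xs = (\<Sum>i<length xs. c (xs ! i) * (U - u (B \<union> set (take i xs))))"
  by (induction xs arbitrary: B) (simp_all add: sum.lessThan_Suc_shift del: sum.lessThan_Suc)

lemma cover_cost_diff_insert:
  "cover_cost u c U B xs - cover_cost u c U (insert x B) xs
     = (\<Sum>i<length xs. c (xs ! i) * marg u x (B \<union> set (take i xs)))"
  by (simp add: cover_cost_conv_sum marg_def sum_subtractf[symmetric] algebra_simps)

lemma mssc_obj_eq_cover_cost:
  "distinct xs \<Longrightarrow> mssc_obj u c xs = cover_cost u c (u (set xs)) {} xs"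
proof (induction xs rule: rev_induct)
  case Nil
  then show ?case by (simp add: mssc_obj_def)
next
  case (snoc y xs)
  have y: "distinct xs" "y \<notin> set xs" using snoc.prems by auto
  have "mssc_obj u c (xs @ [y]) = mssc_obj u c xs + cost c (set (xs @ [y])) * (u (set (xs @ [y])) - u (set xs))"
    unfolding mssc_obj_def by (auto intro: sum.cong)
  moreover have "cost c (set (xs @ [y])) = sum_list (map c xs) + c y"
    using y by (simp add: cost_def sum_list_distinct_conv_sum_set)
  ultimately show ?case
    using snoc.IH[OF y(1)] cover_cost_change_level[of u c "u (set (xs @ [y]))" "{}" xs "u (set xs)"]
    by (simp add: cover_cost_append algebra_simps)
qed

definition residual :: "(nat set \<Rightarrow> real) \<Rightarrow> nat list \<Rightarrow> nat \<Rightarrow> real" where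
  "residual u xs i = u (set xs) - u (set (take i xs))"

lemma mssc_obj_eq_sum_residual:
  "distinct xs \<Longrightarrow> mssc_obj u c xs = (\<Sum>i<length xs. c (xs ! i) * residual u xs i)"
  by (simp add: mssc_obj_eq_cover_cost cover_cost_conv_sum residual_def)

lemma split_at_two_positions:
  assumes "k < j" "j < length xs"
  shows "xs = take k xs @ drop k (take j xs) @ xs ! j # drop (Suc j) xs"
  using assms id_take_nth_drop[of j xs]
  by (metis append.assoc append_take_drop_id less_imp_le_nat min.absorb1 take_take)

lemma move_backward:
  assumes "k < j" "j < length xs"
  shows "move j k xs = take k xs @ xs ! j # drop k (take j xs) @ drop (Suc j) xs"
  using assms by (simp add: move_def Let_def take_append drop_append min_def)

lemma mssc_obj_move_block_gain:
  assumes "distinct (L @ M @ x # T)"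
  shows "mssc_obj u c (L @ M @ x # T) - mssc_obj u c (L @ x # M @ T)
    = (\<Sum>i<length M. c (M ! i) * marg u x (set L \<union> set (take i M)))
      - c x * (u (set L \<union> set M) - u (set L))"
proof -
  define U where "U = u (set (L @ M @ x # T))"
  have "distinct (L @ x # M @ T)" "set (L @ x # M @ T) = set (L @ M @ x # T)"
    using assms by auto
  then have "mssc_obj u c (L @ M @ x # T) - mssc_obj u c (L @ x # M @ T)
    = cover_cost u c U (set L) M - cover_cost u c U (insert x (set L)) M
      - c x * (u (set L \<union> set M) - u (set L))"
    using assms unfolding U_def
    by (simp add: mssc_obj_eq_cover_cost cover_cost_append Un_assoc insert_commute algebra_simps)
  then show ?thesis by (simp add: cover_cost_diff_insert)
qed

text \<open>Moving xs ! j forward to position k would give every element in positions k, ..., j - 1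
  the marginal value of xs ! j in advance, at the price of delaying xs ! j itself.\<close>

lemma local_opt_move_ineq:
  assumes "distinct xs" "k < j" "j < length xs"
    and "mssc_obj u c xs \<le> mssc_obj u c (move j k xs)"
  shows "(\<Sum>i\<in>{k..<j}. c (xs ! i) * marg u (xs ! j) (set (take i xs)))
         \<le> c (xs ! j) * (u (set (take j xs)) - u (set (take k xs)))"
proof -
  define M where "M = drop k (take j xs)"
  have split: "xs = take k xs @ M @ xs ! j # drop (Suc j) xs"
    unfolding M_def using split_at_two_positions[OF assms(2,3)] .
  have prefix: "take k xs @ take i M = take (k + i) xs" if "i < j - k" for i
    using that unfolding M_def by (simp add: drop_take take_add min_def)
  have "(\<Sum>i\<in>{k..<j}. c (xs ! i) * marg u (xs ! j) (set (take i xs)))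
      = (\<Sum>i<length M. c (M ! i) * marg u (xs ! j) (set (take k xs) \<union> set (take i M)))"
  proof -
    have "length M = j - k" "\<And>i. i < j - k \<Longrightarrow> M ! i = xs ! (k + i)"
      unfolding M_def using assms(2,3) by auto
    then show ?thesis
      using prefix by (auto simp: sum.atLeastLessThan_shift_0 atLeast0LessThan intro!: sum.cong
          simp flip: set_append)
  qed
  also have "\<dots> \<le> c (xs ! j) * (u (set (take k xs) \<union> set M) - u (set (take k xs)))"
    using mssc_obj_move_block_gain[of "take k xs" M "xs ! j" "drop (Suc j) xs" u c] assms split
      move_backward[OF assms(2,3)] unfolding M_def by simp
  also have "set (take k xs) \<union> set M = set (take j xs)"
    unfolding M_def using assms(2)
    by (metis append_take_drop_id less_imp_le_nat min.absorb1 set_append take_take)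
  finally show ?thesis .
qed

lemma is_perm_length: "is_perm n xs \<Longrightarrow> length xs = n"
  unfolding is_perm_def by (metis card_lessThan distinct_card)

lemma is_perm_nth_less: "is_perm n xs \<Longrightarrow> i < n \<Longrightarrow> xs ! i < n"
  using is_perm_length unfolding is_perm_def by (metis lessThan_iff nth_mem)

lemma is_perm_set_take_subset: "is_perm n xs \<Longrightarrow> set (take i xs) \<subseteq> {..<n}"
  unfolding is_perm_def by (metis set_take_subset)

lemma residual_length: "residual u xs (length xs) = 0"
  by (simp add: residual_def)

lemma residual_diff_Suc:
  "i < length xs \<Longrightarrow> residual u xs i - residual u xs (Suc i) = marg u (xs ! i) (set (take i xs))"
  by (simp add: residual_def marg_def take_Suc_conv_app_nth)

definition charge :: "(nat set \<Rightarrow> real) \<Rightarrow> nat list \<Rightarrow> nat list \<Rightarrow> nat \<Rightarrow> nat \<Rightarrow> real" where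
  "charge u \<pi> \<sigma> i q = marg u (\<sigma> ! q) (set (take i \<pi>) \<union> set (take q \<sigma>))"

locale monotone_submodular_cover =
  fixes n :: nat and u :: "nat set \<Rightarrow> real" and c :: "nat \<Rightarrow> real"
  assumes mono: "monotone_set_fun n u"
    and submod: "submodular n u"
    and cost_nonneg: "\<And>i. i < n \<Longrightarrow> 0 \<le> c i"
begin

lemma u_mono: "A \<subseteq> B \<Longrightarrow> B \<subseteq> {..<n} \<Longrightarrow> u A \<le> u B"
  using mono unfolding monotone_set_fun_def by blast

lemma residual_perm: "is_perm n xs \<Longrightarrow> residual u xs i = u {..<n} - u (set (take i xs))"
  by (simp add: residual_def is_perm_def)

lemma residual_antimono: "is_perm n xs \<Longrightarrow> antimono (residual u xs)"
  by (intro antimonoI)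
    (simp add: residual_def u_mono set_take_subset_set_take is_perm_set_take_subset)

lemma residual_nonneg: "is_perm n xs \<Longrightarrow> 0 \<le> residual u xs i"
  by (simp add: residual_perm u_mono is_perm_set_take_subset)

lemma sum_charge_eq_residual:
  assumes "is_perm n \<pi>" "is_perm n \<sigma>"
  shows "(\<Sum>q<n. charge u \<pi> \<sigma> i q) = residual u \<pi> i"
proof -
  have "set (take i \<pi>) \<union> set \<sigma> = {..<n}"
    using assms is_perm_set_take_subset[OF assms(1)] unfolding is_perm_def by blast
  then show ?thesis
    using sum_marg_prefixes[where xs = \<sigma> and A = "set (take i \<pi>)" and u = u] assms
    by (simp add: charge_def residual_perm is_perm_length)
qed

lemma head_charges_le:
  assumes \<pi>: "is_perm n \<pi>" and \<sigma>: "is_perm n \<sigma>"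
  shows "(\<Sum>i<n. \<Sum>q<n. if 2 * residual u \<sigma> q < residual u \<pi> i
            then c (\<pi> ! i) * charge u \<pi> \<sigma> i q else 0)
         \<le> mssc_obj u c \<pi> / 2"
proof -
  have inner: "(\<Sum>q<n. if 2 * residual u \<sigma> q < residual u \<pi> i then charge u \<pi> \<sigma> i q else 0)
      \<le> residual u \<pi> i / 2" for i
  proof -
    have "charge u \<pi> \<sigma> i q \<le> residual u \<sigma> q - residual u \<sigma> (Suc q)" if "q < n" for q
      using that \<sigma> marg_antimono[OF submod, of "set (take q \<sigma>)" "set (take i \<pi>) \<union> set (take q \<sigma>)"]
      by (simp add: charge_def residual_diff_Suc is_perm_length is_perm_nth_less
          is_perm_set_take_subset \<pi>)
    moreover have "0 \<le> residual u \<sigma> q - residual u \<sigma> (Suc q)" for q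
      using residual_antimono[OF \<sigma>] by (simp add: antimono_def)
    ultimately have "(\<Sum>q<n. if 2 * residual u \<sigma> q < residual u \<pi> i then charge u \<pi> \<sigma> i q else 0)
        \<le> (\<Sum>q<n. if residual u \<sigma> q < residual u \<pi> i / 2
            then residual u \<sigma> q - residual u \<sigma> (Suc q) else 0)"
      by (intro sum_mono) auto
    also have "\<dots> \<le> max 0 (residual u \<pi> i / 2 - residual u \<sigma> n)"
      by (rule sum_drops_below_le[OF residual_antimono[OF \<sigma>]])
    also have "\<dots> = residual u \<pi> i / 2"
      using \<sigma> \<pi> residual_length[of u \<sigma>] residual_nonneg by (simp add: is_perm_length)
    finally show ?thesis .
  qed
  have "(\<Sum>i<n. \<Sum>q<n. if 2 * residual u \<sigma> q < residual u \<pi> i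
            then c (\<pi> ! i) * charge u \<pi> \<sigma> i q else 0)
      = (\<Sum>i<n. c (\<pi> ! i) *
          (\<Sum>q<n. if 2 * residual u \<sigma> q < residual u \<pi> i then charge u \<pi> \<sigma> i q else 0))"
    by (auto simp: sum_distrib_left intro!: sum.cong)
  also have "\<dots> \<le> (\<Sum>i<n. c (\<pi> ! i) * (residual u \<pi> i / 2))"
    using \<pi> by (intro sum_mono mult_left_mono inner cost_nonneg is_perm_nth_less) auto
  also have "\<dots> = mssc_obj u c \<pi> / 2"
    using \<pi> by (simp add: mssc_obj_eq_sum_residual is_perm_def is_perm_length sum_divide_distrib)
  finally show ?thesis .
qed

end

locale mssc_local_optimum = monotone_submodular_cover +
  fixes \<pi> :: "nat list"
  assumes perm: "is_perm n \<pi>"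
    and local_opt: "\<And>i j. i < n \<Longrightarrow> j < n \<Longrightarrow> mssc_obj u c \<pi> \<le> mssc_obj u c (move i j \<pi>)"
begin

lemma length_\<pi>: "length \<pi> = n"
  using perm by (rule is_perm_length)

lemma tail_bound:
  assumes "x < n" "k \<le> n"
  shows "(\<Sum>i\<in>{k..<n}. c (\<pi> ! i) * marg u x (set (take i \<pi>))) \<le> c x * residual u \<pi> k"
proof -
  obtain j where j: "j < n" "\<pi> ! j = x"
    using assms(1) perm length_\<pi> unfolding is_perm_def by (metis in_set_conv_nth lessThan_iff)
  have after_j: "marg u x (set (take i \<pi>)) = 0" if "j < i" for i
    using that j length_\<pi> by (intro marg_mem_eq_0) (metis in_set_conv_nth length_take min_less_iff_conj nth_take)
  show ?thesis
  proof (cases "j < k")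
    case True
    then have "(\<Sum>i\<in>{k..<n}. c (\<pi> ! i) * marg u x (set (take i \<pi>))) = 0"
      by (intro sum.neutral) (auto simp: after_j)
    then show ?thesis using residual_nonneg[OF perm] cost_nonneg[OF assms(1)] by simp
  next
    case False
    have before_j: "(\<Sum>i\<in>{k..<j}. c (\<pi> ! i) * marg u x (set (take i \<pi>)))
        \<le> c x * (u (set (take j \<pi>)) - u (set (take k \<pi>)))"
    proof (cases "k < j")
      case True
      then show ?thesis using local_opt_move_ineq[of \<pi> k j u c] local_opt[of j k] perm j length_\<pi>
        unfolding is_perm_def by simp
    qed (use False in simp)
    have at_j: "c (\<pi> ! j) * marg u x (set (take j \<pi>)) = c x * (u (set (take (Suc j) \<pi>)) - u (set (take j \<pi>)))"
      using j length_\<pi> by (simp add: marg_def take_Suc_conv_app_nth)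
    have "(\<Sum>i\<in>{k..<n}. c (\<pi> ! i) * marg u x (set (take i \<pi>)))
        = (\<Sum>i\<in>{k..<j}. c (\<pi> ! i) * marg u x (set (take i \<pi>))) + c (\<pi> ! j) * marg u x (set (take j \<pi>))"
    proof -
      have "(\<Sum>i\<in>{Suc j..<n}. c (\<pi> ! i) * marg u x (set (take i \<pi>))) = 0"
        by (intro sum.neutral) (auto simp: after_j)
      then show ?thesis
        using False j by (simp add: sum.atLeastLessThan_concat[of k j n, symmetric]
            sum.atLeast_Suc_lessThan[of j n])
    qed
    also have "\<dots> \<le> c x * (u (set (take (Suc j) \<pi>)) - u (set (take k \<pi>)))"
      using before_j at_j by (simp add: algebra_simps)
    also have "\<dots> \<le> c x * residual u \<pi> k"
      using cost_nonneg[OF assms(1)] perm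
      by (intro mult_left_mono) (simp_all add: residual_perm u_mono is_perm_set_take_subset)
    finally show ?thesis .
  qed
qed

lemma threshold_bound:
  assumes "x < n" "0 \<le> t"
  shows "(\<Sum>i<n. if residual u \<pi> i \<le> t then c (\<pi> ! i) * marg u x (set (take i \<pi>)) else 0)
    \<le> c x * t"
proof -
  obtain k where k: "k \<le> n" "\<And>i. residual u \<pi> i \<le> t \<longleftrightarrow> k \<le> i"
    using antimono_sublevel_eq_atLeast[OF residual_antimono[OF perm], of n t] assms(2)
      residual_length[of u \<pi>] length_\<pi> by auto
  have "(\<Sum>i<n. if residual u \<pi> i \<le> t then c (\<pi> ! i) * marg u x (set (take i \<pi>)) else 0)
      = (\<Sum>i\<in>{k..<n}. c (\<pi> ! i) * marg u x (set (take i \<pi>)))"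
    by (rule sum.mono_neutral_cong_right) (auto simp: k(2))
  also have "\<dots> \<le> c x * residual u \<pi> k"
    by (rule tail_bound[OF assms(1) k(1)])
  also have "\<dots> \<le> c x * t"
    using k cost_nonneg[OF assms(1)] by (simp add: mult_left_mono)
  finally show ?thesis .
qed

lemma tail_charges_le:
  assumes \<sigma>: "is_perm n \<sigma>"
  shows "(\<Sum>q<n. \<Sum>i<n. if residual u \<pi> i \<le> 2 * residual u \<sigma> q
            then c (\<pi> ! i) * charge u \<pi> \<sigma> i q else 0)
         \<le> 2 * mssc_obj u c \<sigma>"
proof -
  have "(\<Sum>q<n. \<Sum>i<n. if residual u \<pi> i \<le> 2 * residual u \<sigma> q
            then c (\<pi> ! i) * charge u \<pi> \<sigma> i q else 0)
      \<le> (\<Sum>q<n. \<Sum>i<n. if residual u \<pi> i \<le> 2 * residual u \<sigma> q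
            then c (\<pi> ! i) * marg u (\<sigma> ! q) (set (take i \<pi>)) else 0)"
    using \<sigma> perm unfolding charge_def by (intro sum_mono)
      (auto intro!: mult_left_mono marg_antimono[OF submod]
        dest: subsetD[OF is_perm_set_take_subset[OF perm]] subsetD[OF is_perm_set_take_subset[OF \<sigma>]]
        simp: cost_nonneg is_perm_nth_less)
  also have "\<dots> \<le> (\<Sum>q<n. c (\<sigma> ! q) * (2 * residual u \<sigma> q))"
    using \<sigma> by (intro sum_mono threshold_bound) (simp_all add: is_perm_nth_less residual_nonneg)
  also have "\<dots> = 2 * mssc_obj u c \<sigma>"
    using \<sigma> by (simp add: mssc_obj_eq_sum_residual is_perm_def is_perm_length sum_distrib_left
        algebra_simps)
  finally show ?thesis .
qed

theorem local_optimum_4_approx: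
  assumes \<sigma>: "is_perm n \<sigma>"
  shows "mssc_obj u c \<pi> \<le> 4 * mssc_obj u c \<sigma>"
proof -
  define weighted where "weighted i q = c (\<pi> ! i) * charge u \<pi> \<sigma> i q" for i q
  define late where "late i q \<longleftrightarrow> residual u \<pi> i \<le> 2 * residual u \<sigma> q" for i q
  have "mssc_obj u c \<pi> = (\<Sum>i<n. c (\<pi> ! i) * residual u \<pi> i)"
    using perm by (simp add: mssc_obj_eq_sum_residual is_perm_def length_\<pi>)
  also have "\<dots> = (\<Sum>i<n. \<Sum>q<n. weighted i q)"
    using sum_charge_eq_residual[OF perm \<sigma>] by (simp add: weighted_def flip: sum_distrib_left)
  also have "\<dots> = (\<Sum>i<n. \<Sum>q<n. if \<not> late i q then weighted i q else 0)
                 + (\<Sum>i<n. \<Sum>q<n. if late i q then weighted i q else 0)"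
    unfolding sum.distrib[symmetric] by (intro sum.cong) auto
  also have "\<dots> = (\<Sum>i<n. \<Sum>q<n. if \<not> late i q then weighted i q else 0)
                 + (\<Sum>q<n. \<Sum>i<n. if late i q then weighted i q else 0)"
    by (subst (2) sum.swap) (rule refl)
  also have "\<dots> \<le> mssc_obj u c \<pi> / 2 + 2 * mssc_obj u c \<sigma>"
    using head_charges_le[OF perm \<sigma>] tail_charges_le[OF \<sigma>]
    unfolding weighted_def late_def not_le by (rule add_mono)
  finally show ?thesis by simp
qed

end

theorem theorem1:
  fixes n :: nat and u :: "nat set \<Rightarrow> real" and c :: "nat \<Rightarrow> real" and \<pi> :: "nat list"
  assumes nonneg: "\<forall>S. S \<subseteq> {..<n} \<longrightarrow> u S \<ge> 0"
    and norm: "u {} = 0"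
    and mono: "monotone_set_fun n u"
    and submod: "submodular n u"
    and sos: "second_order_supermodular n u"
    and cpos: "\<forall>i<n. c i > 0"
    and perm: "is_perm n \<pi>"
    and locopt: "\<forall>i<n. \<forall>j<n. \<not> (mssc_obj u c (move i j \<pi>) < mssc_obj u c \<pi>)"
  shows "\<forall>\<sigma>. is_perm n \<sigma> \<longrightarrow> mssc_obj u c \<pi> \<le> 4 * mssc_obj u c \<sigma>"
proof -
  interpret mssc_local_optimum n u c \<pi>
    using mono submod cpos perm locopt by unfold_locales (auto simp: less_imp_le not_less)
  show ?thesis using local_optimum_4_approx by blast
qed

end
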